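(* Let $(G,\gamma,b)$ be an RES-graph and let $f_0$ and $f_1$ be arcs of $G$ with the same head. Then no basis of the flooding matroid $M(G,\gamma,b)$ contains both $(f_0,0)$ and $(f_1,1)$.
   Context: Graphs are finite and may have loops and multiple edges. Each edge consists of two half-edges; each half-edge is incident to a vertex, and a loop contributes $2$ to the degree of its vertex. An arc is an ordered pair $(h_1,h_2)$ of half-edges forming an edge; its tail is the vertex of $h_1$ and its head is the vertex of $h_2$. A trail is a sequence of arcs whose edges are pairwise distinct and such that the head of each arc (other than the last) is the tail of the next. Its tail and head are the tail of its first arc and the head of its last arc. A circuit is a trail whose head equals its tail. A circuit-decomposition is a collection of circuits using every edge exactly once. A graph is Eulerian if it is connected and every vertex has even degree. A signature is a function $\gamma:E(G)\to\mathbb{Z}_2$. The weight of a trail is the $\mathbb{Z}_2$-sum of $\gamma$ over its edges, and a trail is zero or non-zero accordingly. An RES-graph is a triple $(G,\gamma,b)$ where $G$ is Eulerian, $\gamma$ is a signature of $G$, and $b\in V(G)$. A flooding is a circuit-decomposition of $G$ of size $\deg(b)/2$ in which every circuit has $b$ as its tail and head. A flooding is optimal if it has the maximum number of non-zero circuits among all floodings of $(G,\gamma,b)$. For a zero circuit $C$ with tail and head $b$, a representative of $C$ is a pair $(f,\alpha)$ where $f$ is an arc of $C$ and $\alpha\in\{0,1\}$ is the weight of the initial subtrail of $C$ ending with $f$ (i.e., $C$ with all arcs after $f$ deleted). A system of representatives for a flooding $\mathcal{C}$ is a set consisting of exactly one representative for each zero circuit of $\mathcal{C}$. The flooding matroid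 $M(G,\gamma,b)$ has as ground set all pairs $(f,\alpha)$ with $f$ an arc of $G$ and $\alpha\in\{0,1\}$. Its bases are the systems of representatives of optimal floodings; if an optimal flooding has no zero circuits, then the empty set is a basis. *)

theory Defs
  imports Main "HOL-Library.Z2"
begin

(* A finite graph with loops and multiple edges: vertex set V, edge set E.
   Each edge e has two half-edges (e,False) and (e,True); the half-edge (e,i)
   is incident to the vertex  ends e i.  A loop has ends e False = ends e True. *)

type_synonym 'e halfedge = "'e \<times> bool"
type_synonym 'e arc = "'e halfedge \<times> 'e halfedge"

definition graph :: "'v set \<Rightarrow> 'e set \<Rightarrow> ('e \<Rightarrow> bool \<Rightarrow> 'v) \<Rightarrow> bool" where
  "graph V E ends \<longleftrightarrow> finite V \<and> finite E \<and> (\<forall>e\<in>E. \<forall>i. ends e i \<in> V)"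

definition halfedges :: "'e set \<Rightarrow> 'e halfedge set" where
  "halfedges E = E \<times> UNIV"

definition hvert :: "('e \<Rightarrow> bool \<Rightarrow> 'v) \<Rightarrow> 'e halfedge \<Rightarrow> 'v" where
  "hvert ends h = ends (fst h) (snd h)"

(* degree: number of incident half-edges, so a loop contributes 2 *)
definition deg :: "'e set \<Rightarrow> ('e \<Rightarrow> bool \<Rightarrow> 'v) \<Rightarrow> 'v \<Rightarrow> nat" where
  "deg E ends v = card {h \<in> halfedges E. hvert ends h = v}"

definition arcs :: "'e set \<Rightarrow> 'e arc set" where
  "arcs E = {((e, i), (e, \<not> i)) | e i. e \<in> E}"

definition arc_edge :: "'e arc \<Rightarrow> 'e" where
  "arc_edge a = fst (fst a)"

definition tail :: "('e \<Rightarrow> bool \<Rightarrow> 'v) \<Rightarrow> 'e arc \<Rightarrow> 'v" where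
  "tail ends a = hvert ends (fst a)"

definition head :: "('e \<Rightarrow> bool \<Rightarrow> 'v) \<Rightarrow> 'e arc \<Rightarrow> 'v" where
  "head ends a = hvert ends (snd a)"

definition connected_graph :: "'v set \<Rightarrow> 'e set \<Rightarrow> ('e \<Rightarrow> bool \<Rightarrow> 'v) \<Rightarrow> bool" where
  "connected_graph V E ends \<longleftrightarrow>
     (\<forall>u\<in>V. \<forall>v\<in>V. (u, v) \<in> ({(ends e i, ends e (\<not> i)) | e i. e \<in> E})\<^sup>*)"

definition eulerian :: "'v set \<Rightarrow> 'e set \<Rightarrow> ('e \<Rightarrow> bool \<Rightarrow> 'v) \<Rightarrow> bool" where
  "eulerian V E ends \<longleftrightarrow> graph V E ends \<and> connected_graph V E ends \<and>
     (\<forall>v\<in>V. even (deg E ends v))"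

definition trail :: "'e set \<Rightarrow> ('e \<Rightarrow> bool \<Rightarrow> 'v) \<Rightarrow> 'e arc list \<Rightarrow> bool" where
  "trail E ends T \<longleftrightarrow> T \<noteq> [] \<and> set T \<subseteq> arcs E \<and> distinct (map arc_edge T) \<and>
     (\<forall>k. Suc k < length T \<longrightarrow> head ends (T ! k) = tail ends (T ! Suc k))"

definition trail_tail :: "('e \<Rightarrow> bool \<Rightarrow> 'v) \<Rightarrow> 'e arc list \<Rightarrow> 'v" where
  "trail_tail ends T = tail ends (hd T)"

definition trail_head :: "('e \<Rightarrow> bool \<Rightarrow> 'v) \<Rightarrow> 'e arc list \<Rightarrow> 'v" where
  "trail_head ends T = head ends (last T)"

definition circuit :: "'e set \<Rightarrow> ('e \<Rightarrow> bool \<Rightarrow> 'v) \<Rightarrow> 'e arc list \<Rightarrow> bool" where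
  "circuit E ends C \<longleftrightarrow> trail E ends C \<and> trail_head ends C = trail_tail ends C"

definition circuit_decomposition :: "'e set \<Rightarrow> ('e \<Rightarrow> bool \<Rightarrow> 'v) \<Rightarrow> 'e arc list set \<Rightarrow> bool" where
  "circuit_decomposition E ends \<C> \<longleftrightarrow> finite \<C> \<and> (\<forall>C\<in>\<C>. circuit E ends C) \<and>
     (\<forall>e\<in>E. \<exists>!C\<in>\<C>. e \<in> arc_edge ` set C)"

(* signatures take values in Z2 (type bit) *)
definition weight :: "('e \<Rightarrow> bit) \<Rightarrow> 'e arc list \<Rightarrow> bit" where
  "weight \<gamma> T = (\<Sum>a\<leftarrow>T. \<gamma> (arc_edge a))"

definition res_graph :: "'v set \<Rightarrow> 'e set \<Rightarrow> ('e \<Rightarrow> bool \<Rightarrow> 'v) \<Rightarrow> ('e \<Rightarrow> bit) \<Rightarrow> 'v \<Rightarrow> bool" where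
  "res_graph V E ends \<gamma> b \<longleftrightarrow> eulerian V E ends \<and> b \<in> V"

definition flooding :: "'e set \<Rightarrow> ('e \<Rightarrow> bool \<Rightarrow> 'v) \<Rightarrow> 'v \<Rightarrow> 'e arc list set \<Rightarrow> bool" where
  "flooding E ends b \<C> \<longleftrightarrow> circuit_decomposition E ends \<C> \<and> card \<C> = deg E ends b div 2 \<and>
     (\<forall>C\<in>\<C>. trail_tail ends C = b \<and> trail_head ends C = b)"

definition nonzero_count :: "('e \<Rightarrow> bit) \<Rightarrow> 'e arc list set \<Rightarrow> nat" where
  "nonzero_count \<gamma> \<C> = card {C\<in>\<C>. weight \<gamma> C \<noteq> 0}"

definition optimal_flooding :: "'e set \<Rightarrow> ('e \<Rightarrow> bool \<Rightarrow> 'v) \<Rightarrow> ('e \<Rightarrow> bit) \<Rightarrow> 'v \<Rightarrow> 'e arc list set \<Rightarrow> bool" where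
  "optimal_flooding E ends \<gamma> b \<C> \<longleftrightarrow> flooding E ends b \<C> \<and>
     (\<forall>\<C>'. flooding E ends b \<C>' \<longrightarrow> nonzero_count \<gamma> \<C>' \<le> nonzero_count \<gamma> \<C>)"

definition representative :: "('e \<Rightarrow> bit) \<Rightarrow> 'e arc list \<Rightarrow> 'e arc \<times> bit \<Rightarrow> bool" where
  "representative \<gamma> C r \<longleftrightarrow>
     (\<exists>k<length C. fst r = C ! k \<and> snd r = weight \<gamma> (take (Suc k) C))"

definition system_of_representatives ::
  "('e \<Rightarrow> bit) \<Rightarrow> 'e arc list set \<Rightarrow> ('e arc \<times> bit) set \<Rightarrow> bool" where
  "system_of_representatives \<gamma> \<C> S \<longleftrightarrow>
     (\<exists>g. (\<forall>C\<in>\<C>. weight \<gamma> C = 0 \<longrightarrow> representative \<gamma> C (g C)) \<and>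
          inj_on g {C\<in>\<C>. weight \<gamma> C = 0} \<and>
          S = g ` {C\<in>\<C>. weight \<gamma> C = 0})"

definition flooding_matroid_bases ::
  "'e set \<Rightarrow> ('e \<Rightarrow> bool \<Rightarrow> 'v) \<Rightarrow> ('e \<Rightarrow> bit) \<Rightarrow> 'v \<Rightarrow> ('e arc \<times> bit) set set" where
  "flooding_matroid_bases E ends \<gamma> b =
     {S. \<exists>\<C>. optimal_flooding E ends \<gamma> b \<C> \<and> system_of_representatives \<gamma> \<C> S}"

end

theory Submission imports Defs begin

text \<open>Let \<open>C\<^sub>0\<close> and \<open>C\<^sub>1\<close> be the zero circuits represented by \<open>(f\<^sub>0, 0)\<close> and
  \<open>(f\<^sub>1, 1)\<close>. Since \<open>f\<^sub>0\<close> and \<open>f\<^sub>1\<close> have the same head, the initial subtrail of each circuit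
  up to its representative arc can be completed by the final subtrail of the other. The two
  resulting circuits through \<open>b\<close> use exactly the edges of \<open>C\<^sub>0\<close> and \<open>C\<^sub>1\<close>, and each has weight
  \<open>0 + 1 = 1\<close>. Exchanging them for \<open>C\<^sub>0\<close> and \<open>C\<^sub>1\<close> gives a flooding with two more non-zero
  circuits, contradicting optimality.\<close>

definition edges :: "'e arc list \<Rightarrow> 'e set" where
  "edges T = arc_edge ` set T"

lemma edges_append [simp]: "edges (xs @ ys) = edges xs \<union> edges ys"
  unfolding edges_def by auto

lemma arc_edge_mem: "a \<in> arcs E \<Longrightarrow> arc_edge a \<in> E"
  unfolding arcs_def arc_edge_def by auto

lemma circuit_edges_nonempty: "circuit E ends C \<Longrightarrow> edges C \<noteq> {}"
  unfolding circuit_def trail_def edges_def by auto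

lemma trail_iff_successively:
  "trail E ends T \<longleftrightarrow> T \<noteq> [] \<and> set T \<subseteq> arcs E \<and> distinct (map arc_edge T) \<and>
     successively (\<lambda>x y. head ends x = tail ends y) T"
  unfolding trail_def successively_conv_nth by blast

definition splice_at :: "'a list \<Rightarrow> nat \<Rightarrow> 'a list \<Rightarrow> nat \<Rightarrow> 'a list" where
  "splice_at xs i ys j = take (Suc i) xs @ drop (Suc j) ys"

lemma edges_take_drop: "edges C = edges (take n C) \<union> edges (drop n C)"
  by (metis append_take_drop_id edges_append)

lemma edges_take_drop_disjoint:
  "distinct (map arc_edge C) \<Longrightarrow> edges (take n C) \<inter> edges (drop n C) = {}"
  unfolding edges_def by (metis append_take_drop_id distinct_append map_append set_map)

lemma distinct_map_splice_at:
  assumes "distinct (map f xs)" and "distinct (map f ys)" and "f ` set xs \<inter> f ` set ys = {}"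
  shows "distinct (map f (splice_at xs i ys j))"
  using assms set_take_subset[of "Suc i" xs] set_drop_subset[of "Suc j" ys]
  by (auto simp: splice_at_def distinct_map intro: inj_on_subset)

lemma edges_splice_at_disjoint:
  assumes "distinct (map arc_edge C0)" and "distinct (map arc_edge C1)"
    and "edges C0 \<inter> edges C1 = {}"
  shows "edges (splice_at C0 k0 C1 k1) \<inter> edges (splice_at C1 k1 C0 k0) = {}"
proof -
  have crossed: "(a \<union> d) \<inter> (c \<union> b) = {}"
    if "a \<union> b \<subseteq> X" "c \<union> d \<subseteq> Y" "X \<inter> Y = {}" "a \<inter> b = {}" "c \<inter> d = {}"
    for a b c d X Y :: "'e set"
    using that by blast
  show ?thesis
    unfolding splice_at_def edges_append
    by (rule crossed[OF _ _ assms(3) edges_take_drop_disjoint[OF assms(1)]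
          edges_take_drop_disjoint[OF assms(2)]])
      (simp_all only: edges_take_drop[symmetric] order_refl)
qed

lemma edges_splice_at_Un:
  "edges (splice_at C0 k0 C1 k1) \<union> edges (splice_at C1 k1 C0 k0) = edges C0 \<union> edges C1"
  unfolding splice_at_def edges_append
    edges_take_drop[of C0 "Suc k0"] edges_take_drop[of C1 "Suc k1"]
  by (simp only: Un_ac)

lemma weight_append: "weight \<gamma> (xs @ ys) = weight \<gamma> xs + weight \<gamma> ys"
  unfolding weight_def by simp

lemma weight_splice_at:
  "weight \<gamma> (splice_at C0 k0 C1 k1) = weight \<gamma> (take (Suc k0) C0) + weight \<gamma> C1 - weight \<gamma> (take (Suc k1) C1)"
proof -
  have "weight \<gamma> C1 = weight \<gamma> (take (Suc k1) C1) + weight \<gamma> (drop (Suc k1) C1)"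
    by (metis append_take_drop_id weight_append)
  then show ?thesis
    unfolding splice_at_def weight_append by (metis add_diff_cancel_left' add_diff_eq)
qed

lemma successively_splice_at:
  assumes "successively R xs" and "successively R ys"
    and "i < length xs" and "j < length ys" and "\<And>z. R (ys ! j) z \<Longrightarrow> R (xs ! i) z"
  shows "successively R (splice_at xs i ys j)"
proof -
  have "successively R (take (Suc j) ys @ drop (Suc j) ys)"
    using assms(2) by simp
  moreover have "take (Suc j) ys \<noteq> []" "last (take (Suc j) ys) = ys ! j"
    using assms(4) by (simp_all add: take_Suc_conv_app_nth)
  ultimately have "successively R (drop (Suc j) ys)"
    and "drop (Suc j) ys \<noteq> [] \<Longrightarrow> R (ys ! j) (hd (drop (Suc j) ys))"
    unfolding successively_append_iff by metis+
  moreover have "successively R (take (Suc i) xs)"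
    using assms(1) successively_append_iff[of R "take (Suc i) xs" "drop (Suc i) xs"] by simp
  moreover have "take (Suc i) xs \<noteq> []" "last (take (Suc i) xs) = xs ! i"
    using assms(3) by (simp_all add: take_Suc_conv_app_nth)
  ultimately show ?thesis
    using assms(5) by (auto simp: splice_at_def successively_append_iff)
qed

lemma circuit_splice_at:
  assumes "circuit E ends C0" and "circuit E ends C1"
    and "trail_tail ends C0 = b" and "trail_head ends C1 = b"
    and "k0 < length C0" and "k1 < length C1"
    and "head ends (C0 ! k0) = head ends (C1 ! k1)"
    and "edges C0 \<inter> edges C1 = {}"
  shows "circuit E ends (splice_at C0 k0 C1 k1)"
    and "trail_tail ends (splice_at C0 k0 C1 k1) = b"
    and "trail_head ends (splice_at C0 k0 C1 k1) = b"
proof -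
  let ?S = "splice_at C0 k0 C1 k1"
  have T0: "trail E ends C0" and T1: "trail E ends C1"
    using assms(1,2) unfolding circuit_def by auto
  have "successively (\<lambda>x y. head ends x = tail ends y) ?S"
    using T0 T1 assms(5-7) by (intro successively_splice_at) (auto simp: trail_iff_successively)
  moreover have "distinct (map arc_edge ?S)"
    using T0 T1 assms(8) by (intro distinct_map_splice_at) (auto simp: trail_def edges_def)
  moreover have "set ?S \<subseteq> arcs E"
    using T0 T1 set_take_subset[of "Suc k0" C0] set_drop_subset[of "Suc k1" C1]
    unfolding trail_def splice_at_def by auto
  moreover have "?S \<noteq> []"
    using assms(5) by (cases C0) (simp_all add: splice_at_def)
  ultimately have "trail E ends ?S"
    unfolding trail_iff_successively by simp
  moreover show "trail_tail ends ?S = b"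
    using assms(3,5) unfolding trail_tail_def splice_at_def by (cases C0) auto
  moreover show "trail_head ends ?S = b"
  proof (cases "Suc k1 = length C1")
    case True
    have "C1 \<noteq> []"
      using assms(6) by auto
    moreover have "k1 = length C1 - 1"
      using True by simp
    ultimately have "drop (Suc k1) C1 = []" "last C1 = C1 ! k1"
      using True by (simp_all add: last_conv_nth)
    moreover have "last (take (Suc k0) C0) = C0 ! k0"
      using assms(5) by (simp add: take_Suc_conv_app_nth)
    ultimately show ?thesis
      using assms(4,7) by (simp add: splice_at_def trail_head_def)
  next
    case False
    then have "drop (Suc k1) C1 \<noteq> []" "last (drop (Suc k1) C1) = last C1"
      using assms(6) by simp_all
    then show ?thesis
      using assms(4) by (simp add: splice_at_def trail_head_def)
  qed
  ultimately show "circuit E ends ?S"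
    unfolding circuit_def by simp
qed

lemma circuit_decomposition_unique:
  assumes "circuit_decomposition E ends \<C>" and "C \<in> \<C>" and "D \<in> \<C>"
    and "e \<in> edges C" and "e \<in> edges D"
  shows "C = D"
proof -
  have "set C \<subseteq> arcs E"
    using assms(1,2) unfolding circuit_decomposition_def circuit_def trail_def by auto
  then have "e \<in> E"
    using assms(4) arc_edge_mem unfolding edges_def by blast
  then show ?thesis
    using assms unfolding circuit_decomposition_def edges_def by blast
qed

lemma circuit_decomposition_exchange:
  assumes dec: "circuit_decomposition E ends \<C>" and C0: "C0 \<in> \<C>" and C1: "C1 \<in> \<C>"
    and "C0 \<noteq> C1" and circ: "circuit E ends A" "circuit E ends A'"
    and disj: "edges A \<inter> edges A' = {}" and cover: "edges A \<union> edges A' = edges C0 \<union> edges C1"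
  defines "\<C>' \<equiv> (\<C> - {C0, C1}) \<union> {A, A'}"
  shows "circuit_decomposition E ends \<C>'" and "card \<C>' = card \<C>"
    and "A \<notin> \<C> - {C0, C1}" and "A' \<notin> \<C> - {C0, C1}" and "A \<noteq> A'"
proof -
  have fin: "finite \<C>"
    using dec unfolding circuit_decomposition_def by simp
  have not_rest: "X \<notin> \<C> - {C0, C1}"
    if X_circ: "circuit E ends X" and X_edges: "edges X \<subseteq> edges C0 \<union> edges C1" for X
  proof
    assume X: "X \<in> \<C> - {C0, C1}"
    obtain e where e: "e \<in> edges X"
      using circuit_edges_nonempty[OF X_circ] by blast
    have "X \<in> \<C>" "X \<noteq> C0" "X \<noteq> C1"
      using X by auto
    then have "e \<notin> edges C0" and "e \<notin> edges C1"
      using circuit_decomposition_unique[OF dec _ C0 e] circuit_decomposition_unique[OF dec _ C1 e]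
      by blast+
    then show False
      using e X_edges by blast
  qed
  have "edges A \<subseteq> edges C0 \<union> edges C1" and "edges A' \<subseteq> edges C0 \<union> edges C1"
    using cover Un_upper1 Un_upper2 by metis+
  then show A_new: "A \<notin> \<C> - {C0, C1}" and A'_new: "A' \<notin> \<C> - {C0, C1}"
    using not_rest circ by simp_all
  show AA': "A \<noteq> A'"
    using disj circuit_edges_nonempty[OF circ(1)] by auto
  show "card \<C>' = card \<C>"
  proof -
    have "card \<C>' = card (\<C> - {C0, C1}) + 2"
      unfolding \<C>'_def using fin A_new A'_new AA' by (subst card_Un_disjoint) auto
    moreover have "card {C0, C1} \<le> card \<C>"
      using fin C0 C1 by (intro card_mono) auto
    ultimately show ?thesis
      using fin C0 C1 \<open>C0 \<noteq> C1\<close> by (simp add: card_Diff_subset)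
  qed
  have "\<exists>!C\<in>\<C>'. e \<in> edges C" if "e \<in> E" for e
  proof -
    obtain D where D: "D \<in> \<C>" "e \<in> edges D"
      using dec \<open>e \<in> E\<close> unfolding circuit_decomposition_def edges_def by blast
    have only_D: "D' = D" if "D' \<in> \<C>" "e \<in> edges D'" for D'
      using circuit_decomposition_unique[OF dec that(1) D(1) that(2) D(2)] .
    show ?thesis
    proof (cases "D = C0 \<or> D = C1")
      case True
      then have "e \<in> edges A \<or> e \<in> edges A'"
        using cover D(2) by blast
      moreover have "D' \<notin> \<C> - {C0, C1}" if "e \<in> edges D'" for D'
        using only_D[of D'] that True by blast
      ultimately show ?thesis
        using disj unfolding \<C>'_def by blast
    next
      case False
      then have "D \<in> \<C>'"
        using D(1) unfolding \<C>'_def by simp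
      have "e \<notin> edges C0 \<union> edges C1"
        using only_D[OF C0] only_D[OF C1] False by blast
      then have "C = D" if "C \<in> \<C>'" "e \<in> edges C" for C
        using that only_D unfolding \<C>'_def cover[symmetric] by blast
      then show ?thesis
        using D(2) \<open>D \<in> \<C>'\<close> by blast
    qed
  qed
  then show "circuit_decomposition E ends \<C>'"
    using dec circ fin unfolding circuit_decomposition_def \<C>'_def edges_def by auto
qed

lemma nonzero_count_exchange:
  assumes "finite \<C>" and "C0 \<in> \<C>" and "C1 \<in> \<C>"
    and "weight \<gamma> C0 = 0" and "weight \<gamma> C1 = 0"
    and "weight \<gamma> A \<noteq> 0" and "weight \<gamma> A' \<noteq> 0" and "A \<noteq> A'"
    and "A \<notin> \<C> - {C0, C1}" and "A' \<notin> \<C> - {C0, C1}"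
  shows "nonzero_count \<gamma> ((\<C> - {C0, C1}) \<union> {A, A'}) = nonzero_count \<gamma> \<C> + 2"
proof -
  have "{C \<in> (\<C> - {C0, C1}) \<union> {A, A'}. weight \<gamma> C \<noteq> 0} = {C\<in>\<C>. weight \<gamma> C \<noteq> 0} \<union> {A, A'}"
    using assms(4-7) by auto
  moreover have "A \<notin> {C\<in>\<C>. weight \<gamma> C \<noteq> 0}" and "A' \<notin> {C\<in>\<C>. weight \<gamma> C \<noteq> 0}"
    using assms(4-7,9,10) by auto
  ultimately show ?thesis
    unfolding nonzero_count_def using assms(1,8) by (simp add: card_Un_disjoint)
qed

lemma optimal_flooding_no_crossing_zero_circuits:
  assumes opt: "optimal_flooding E ends \<gamma> b \<C>"
    and "C0 \<in> \<C>" and "C1 \<in> \<C>" and "C0 \<noteq> C1"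
    and "weight \<gamma> C0 = 0" and "weight \<gamma> C1 = 0"
    and "k0 < length C0" and "k1 < length C1"
    and "head ends (C0 ! k0) = head ends (C1 ! k1)"
    and "weight \<gamma> (take (Suc k0) C0) \<noteq> weight \<gamma> (take (Suc k1) C1)"
  shows False
proof -
  define A where "A = splice_at C0 k0 C1 k1"
  define A' where "A' = splice_at C1 k1 C0 k0"
  define \<C>' where "\<C>' = (\<C> - {C0, C1}) \<union> {A, A'}"
  have fl: "flooding E ends b \<C>"
    using opt unfolding optimal_flooding_def by simp
  then have dec: "circuit_decomposition E ends \<C>"
    and at_b: "\<forall>C\<in>\<C>. trail_tail ends C = b \<and> trail_head ends C = b"
    unfolding flooding_def by auto
  then have circ: "\<forall>C\<in>\<C>. circuit E ends C"
    unfolding circuit_decomposition_def by simp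
  have disj: "edges C0 \<inter> edges C1 = {}"
    using circuit_decomposition_unique[OF dec assms(2,3)] assms(4) by blast
  have distinct_edges: "distinct (map arc_edge C)" if "C \<in> \<C>" for C
    using circ that unfolding circuit_def trail_def by simp
  have A: "circuit E ends A" "trail_tail ends A = b" "trail_head ends A = b"
    unfolding A_def using circ at_b assms(2,3,7-9) disj by (intro circuit_splice_at; auto)+
  have A': "circuit E ends A'" "trail_tail ends A' = b" "trail_head ends A' = b"
    unfolding A'_def using circ at_b assms(2,3,7-9) disj by (intro circuit_splice_at; auto)+
  note exchange = circuit_decomposition_exchange[OF dec assms(2-4) A(1) A'(1), folded \<C>'_def]
  have "edges A \<inter> edges A' = {}"
    unfolding A_def A'_def using edges_splice_at_disjoint distinct_edges assms(2,3) disj by blast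
  note exchange = exchange[OF this edges_splice_at_Un[of C0 k0 C1 k1, folded A_def A'_def]]
  have "flooding E ends b \<C>'"
    using fl exchange(1,2) at_b A A' unfolding flooding_def \<C>'_def by auto
  then have le: "nonzero_count \<gamma> \<C>' \<le> nonzero_count \<gamma> \<C>"
    using opt unfolding optimal_flooding_def by simp
  have "weight \<gamma> A = 1" and "weight \<gamma> A' = 1"
    using assms(5,6,10) unfolding A_def A'_def weight_splice_at
    by (cases "weight \<gamma> (take (Suc k0) C0)"; simp)+
  then have "nonzero_count \<gamma> \<C>' = nonzero_count \<gamma> \<C> + 2"
    unfolding \<C>'_def using dec exchange(3-5) assms(2,3,5,6)
    by (intro nonzero_count_exchange) (auto simp: circuit_decomposition_def)
  with le show False by simp
qed

theorem mainTheorem4: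
  fixes V :: "'v set" and E :: "'e set" and ends :: "'e \<Rightarrow> bool \<Rightarrow> 'v"
    and \<gamma> :: "'e \<Rightarrow> bit" and b :: 'v
    and f0 f1 :: "'e arc" and B :: "('e arc \<times> bit) set"
  assumes "res_graph V E ends \<gamma> b"
    and "f0 \<in> arcs E" and "f1 \<in> arcs E"
    and "head ends f0 = head ends f1"
    and "B \<in> flooding_matroid_bases E ends \<gamma> b"
  shows "\<not> ((f0, 0) \<in> B \<and> (f1, 1) \<in> B)"
proof
  assume "(f0, 0) \<in> B \<and> (f1, 1) \<in> B"
  moreover obtain \<C> g where opt: "optimal_flooding E ends \<gamma> b \<C>"
    and rep: "\<forall>C\<in>\<C>. weight \<gamma> C = 0 \<longrightarrow> representative \<gamma> C (g C)"
    and "B = g ` {C\<in>\<C>. weight \<gamma> C = 0}"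
    using assms(5) unfolding flooding_matroid_bases_def system_of_representatives_def by blast
  ultimately obtain C0 C1 where C0: "C0 \<in> \<C>" "weight \<gamma> C0 = 0" "g C0 = (f0, 0)"
    and C1: "C1 \<in> \<C>" "weight \<gamma> C1 = 0" "g C1 = (f1, 1)"
    by auto
  obtain k0 where k0: "k0 < length C0" "f0 = C0 ! k0" "weight \<gamma> (take (Suc k0) C0) = 0"
    using rep C0 unfolding representative_def by force
  obtain k1 where k1: "k1 < length C1" "f1 = C1 ! k1" "weight \<gamma> (take (Suc k1) C1) = 1"
    using rep C1 unfolding representative_def by force
  have "C0 \<noteq> C1"
    using C0(3) C1(3) by auto
  then show False
    using optimal_flooding_no_crossing_zero_circuits[OF opt C0(1) C1(1) _ C0(2) C1(2) k0(1) k1(1)]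
      assms(4) k0(2,3) k1(2,3) by simp
qed

end
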